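(* Let $L,B>0$ satisfy $$2A^2:=\pi^2\Big[\frac{3}{L^2}+\frac{1}{4B^2}\Big]-1>0,$$ and let $u_0$ satisfy $$\|u_0\|^2<\frac{A^2}{2\pi^2\big(\frac{1}{L^2}+\frac{1}{4B^2}\big)}.$$ Suppose $u\in L^\infty(0,\infty;H^1_0(\Omega))$ is a solution of $$u_t+u_x+u^2u_x+u_{xxx}+u_{xyy}=0\text{ in }\Omega\times(0,\infty),\quad u(x,\pm B,t)=0,\quad u(0,y,t)=u(L,y,t)=u_x(L,y,t)=0,\quad u(\cdot,0)=u_0,$$ regular enough that multiplying the equation by $u$ and by $(1+x)u$ and integrating by parts over $\Omega$ is justified. Then for all $t\ge0$, $$\|u\|^2(t)\le\big(1+x,u^2\big)(t)\le e^{-\frac{A^2}{1+L}t}\big(1+x,u_0^2\big).$$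
   Context: $\Omega=(0,L)\times(-B,B)$, $\|\cdot\|$ is the $L^2(\Omega)$ norm, and $\big(1+x,w^2\big)(t):=\int_\Omega(1+x)\,w^2(x,y,t)\,dx\,dy$. *)

theory Defs
  imports "HOL-Analysis.Analysis"
begin

definition spacetime :: "real \<Rightarrow> real \<Rightarrow> (real \<times> real \<times> real) set" where
  "spacetime L B = {0..L} \<times> {-B..B} \<times> {0..}"

definition jointly :: "(real \<Rightarrow> real \<Rightarrow> real \<Rightarrow> real) \<Rightarrow> real \<times> real \<times> real \<Rightarrow> real" where
  "jointly f = (\<lambda>(x, y, t). f x y t)"

text \<open>L2 inner products over Omega = (0,L) x (-B,B) (boundary has measure zero, so
  the closed rectangle is used): the squared norm and the weighted quantity (1+x, w^2).\<close>

definition sqnorm :: "real \<Rightarrow> real \<Rightarrow> (real \<Rightarrow> real \<Rightarrow> real) \<Rightarrow> real" where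
  "sqnorm L B w = integral ({0..L} \<times> {-B..B}) (\<lambda>(x, y). (w x y)\<^sup>2)"

definition wnorm :: "real \<Rightarrow> real \<Rightarrow> (real \<Rightarrow> real \<Rightarrow> real) \<Rightarrow> real" where
  "wnorm L B w = integral ({0..L} \<times> {-B..B}) (\<lambda>(x, y). (1 + x) * (w x y)\<^sup>2)"

text \<open>All partial derivatives used in the energy identities exist (one-sided at the
  boundary) and are jointly continuous on the closed space-time domain; the mixed
  derivative u_xy is the same whether taken as d/dy u_x or d/dx u_y.\<close>

definition mzk_solution ::
  "real \<Rightarrow> real \<Rightarrow> (real \<Rightarrow> real \<Rightarrow> real \<Rightarrow> real) \<Rightarrow> (real \<Rightarrow> real \<Rightarrow> real) \<Rightarrow> bool" where
  "mzk_solution L B u u0 \<longleftrightarrow>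
    (\<exists>ux uxx uxxx uy uyy uxy uxyy ut :: real \<Rightarrow> real \<Rightarrow> real \<Rightarrow> real.
      (\<forall>f \<in> {u, ux, uxx, uxxx, uy, uyy, uxy, uxyy, ut}. continuous_on (spacetime L B) (jointly f)) \<and>
      (\<forall>x y t. (x, y, t) \<in> spacetime L B \<longrightarrow>
         ((\<lambda>s. u s y t) has_real_derivative ux x y t) (at x within {0..L}) \<and>
         ((\<lambda>s. ux s y t) has_real_derivative uxx x y t) (at x within {0..L}) \<and>
         ((\<lambda>s. uxx s y t) has_real_derivative uxxx x y t) (at x within {0..L}) \<and>
         ((\<lambda>s. u x s t) has_real_derivative uy x y t) (at y within {-B..B}) \<and>
         ((\<lambda>s. uy x s t) has_real_derivative uyy x y t) (at y within {-B..B}) \<and>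
         ((\<lambda>s. ux x s t) has_real_derivative uxy x y t) (at y within {-B..B}) \<and>
         ((\<lambda>s. uy s y t) has_real_derivative uxy x y t) (at x within {0..L}) \<and>
         ((\<lambda>s. uyy s y t) has_real_derivative uxyy x y t) (at x within {0..L}) \<and>
         ((\<lambda>s. u x y s) has_real_derivative ut x y t) (at t within {0..})) \<and>
      (\<forall>x y t. 0 < x \<and> x < L \<and> -B < y \<and> y < B \<and> 0 < t \<longrightarrow>
         ut x y t + ux x y t + (u x y t)\<^sup>2 * ux x y t + uxxx x y t + uxyy x y t = 0) \<and>
      (\<forall>x t. 0 \<le> x \<and> x \<le> L \<and> 0 \<le> t \<longrightarrow> u x (-B) t = 0 \<and> u x B t = 0) \<and>
      (\<forall>y t. -B \<le> y \<and> y \<le> B \<and> 0 \<le> t \<longrightarrow> u 0 y t = 0 \<and> u L y t = 0 \<and> ux L y t = 0) \<and>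
      (\<forall>x y. 0 \<le> x \<and> x \<le> L \<and> -B \<le> y \<and> y \<le> B \<longrightarrow> u x y 0 = u0 x y) \<and>
      (\<exists>C. \<forall>t\<ge>0. sqnorm L B (\<lambda>x y. u x y t) + sqnorm L B (\<lambda>x y. ux x y t)
                    + sqnorm L B (\<lambda>x y. uy x y t) \<le> C))"

end

theory Submission
  imports Defs
begin

text \<open>Multiplying the equation by \<open>u\<close> and integrating by parts gives
  \<open>d/dt \<parallel>u\<parallel>\<^sup>2 = -\<integral> u\<^sub>x(0,y)\<^sup>2 dy \<le> 0\<close>, so \<open>\<parallel>u(t)\<parallel> \<le> \<parallel>u\<^sub>0\<parallel>\<close>.
  Multiplying by \<open>(1 + x) u\<close> gives
  \<open>d/dt (1+x,u\<^sup>2) = -\<integral> u\<^sub>x(0,y)\<^sup>2 dy - 3\<parallel>u\<^sub>x\<parallel>\<^sup>2 - \<parallel>u\<^sub>y\<parallel>\<^sup>2 + \<parallel>u\<parallel>\<^sup>2 + \<integral>u\<^sup>4 / 2\<close>.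
  Ladyzhenskaya's inequality \<open>\<integral>u\<^sup>4 \<le> \<parallel>u\<parallel>\<^sup>2 (\<parallel>u\<^sub>x\<parallel>\<^sup>2 + \<parallel>u\<^sub>y\<parallel>\<^sup>2) / 2\<close>, the smallness of
  \<open>\<parallel>u\<parallel>\<^sup>2 \<le> \<parallel>u\<^sub>0\<parallel>\<^sup>2\<close> and Wirtinger's inequalities \<open>(\<pi>/L)\<^sup>2 \<parallel>u\<parallel>\<^sup>2 \<le> \<parallel>u\<^sub>x\<parallel>\<^sup>2\<close>,
  \<open>(\<pi>/2B)\<^sup>2 \<parallel>u\<parallel>\<^sup>2 \<le> \<parallel>u\<^sub>y\<parallel>\<^sup>2\<close> bound the right-hand side by
  \<open>-A\<^sup>2 \<parallel>u\<parallel>\<^sup>2 \<le> -A\<^sup>2 (1+x,u\<^sup>2) / (1 + L)\<close>, and the exponential decay follows.\<close>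

section \<open>One-dimensional inequalities\<close>

lemma wirtinger_inequality_below_optimal:
  fixes f f' :: "real \<Rightarrow> real"
  assumes "a < b"
    and f': "\<And>x. x \<in> {a..b} \<Longrightarrow> (f has_real_derivative f' x) (at x within {a..b})"
    and "continuous_on {a..b} f'" and "f a = 0" "f b = 0"
    and "0 < k" "k < pi / (b - a)"
  shows "k\<^sup>2 * integral {a..b} (\<lambda>x. (f x)\<^sup>2) \<le> integral {a..b} (\<lambda>x. (f' x)\<^sup>2)"
proof -
  text \<open>With \<open>\<phi> = k cot \<theta>\<close>, \<open>\<theta> x = k (x - a) + (\<pi> - k (b - a)) / 2 \<in> (0, \<pi>)\<close>, one has
    \<open>(f' - \<phi> f)\<^sup>2 = f'\<^sup>2 - k\<^sup>2 f\<^sup>2 - (\<phi> f\<^sup>2)'\<close>, and \<open>\<phi> f\<^sup>2\<close> vanishes at both ends.\<close>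
  define \<theta> where "\<theta> x = k * (x - a) + (pi - k * (b - a)) / 2" for x
  have "k * (b - a) < pi"
    using assms by (simp add: field_simps)
  then have \<theta>_range: "0 < \<theta> x \<and> \<theta> x < pi" if "x \<in> {a..b}" for x
  proof -
    have "0 \<le> k * (x - a)" "k * (x - a) \<le> k * (b - a)"
      using that \<open>0 < k\<close> by (simp_all add: mult_left_mono)
    then show ?thesis
      using \<open>k * (b - a) < pi\<close> unfolding \<theta>_def by (simp add: field_simps)
  qed
  have sin_pos: "sin (\<theta> x) > 0" if "x \<in> {a..b}" for x
    using \<theta>_range[OF that] by (simp add: sin_gt_zero)
  define \<phi> where "\<phi> x = k * cos (\<theta> x) / sin (\<theta> x)" for x
  define D where "D x = (f' x)\<^sup>2 - k\<^sup>2 * (f x)\<^sup>2 - (f' x - \<phi> x * f x)\<^sup>2" for x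
  have cont_f: "continuous_on {a..b} f"
    using f' by (rule DERIV_continuous_on)
  have cont_\<phi>: "continuous_on {a..b} \<phi>"
    using sin_pos unfolding \<phi>_def \<theta>_def by (intro continuous_intros) force+
  have "(D has_integral (\<phi> b * (f b)\<^sup>2 - \<phi> a * (f a)\<^sup>2)) {a..b}"
  proof (rule fundamental_theorem_of_calculus[OF less_imp_le[OF \<open>a < b\<close>]])
    fix x assume x: "x \<in> {a..b}"
    have "((\<lambda>x. \<phi> x * (f x)\<^sup>2) has_real_derivative D x) (at x within {a..b})"
      using f'[OF x] sin_pos[OF x] unfolding \<phi>_def D_def \<theta>_def
      by (auto intro!: derivative_eq_intros simp: field_simps power2_eq_square)
    then show "((\<lambda>x. \<phi> x * (f x)\<^sup>2) has_vector_derivative D x) (at x within {a..b})"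
      by (simp add: has_real_derivative_iff_has_vector_derivative)
  qed
  then have "integral {a..b} D = 0"
    using \<open>f a = 0\<close> \<open>f b = 0\<close> by (simp add: integral_unique)
  moreover have "0 \<le> integral {a..b} (\<lambda>x. (f' x - \<phi> x * f x)\<^sup>2)"
    using assms cont_f cont_\<phi>
    by (intro integral_nonneg integrable_continuous_interval continuous_intros) auto
  moreover have "integral {a..b} D = integral {a..b} (\<lambda>x. (f' x)\<^sup>2) - k\<^sup>2 * integral {a..b} (\<lambda>x. (f x)\<^sup>2)
      - integral {a..b} (\<lambda>x. (f' x - \<phi> x * f x)\<^sup>2)"
    unfolding D_def using assms cont_f cont_\<phi>
    by (subst integral_diff integral_mult_right;
        (intro integrable_diff integrable_on_mult_right integrable_continuous_interval continuous_intros)?; simp)+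
  ultimately show ?thesis
    by linarith
qed

lemma wirtinger_inequality:
  fixes f f' :: "real \<Rightarrow> real"
  assumes "a < b"
    and "\<And>x. x \<in> {a..b} \<Longrightarrow> (f has_real_derivative f' x) (at x within {a..b})"
    and "continuous_on {a..b} f'" and "f a = 0" "f b = 0"
  shows "(pi / (b - a))\<^sup>2 * integral {a..b} (\<lambda>x. (f x)\<^sup>2) \<le> integral {a..b} (\<lambda>x. (f' x)\<^sup>2)"
proof -
  have "((\<lambda>k. k\<^sup>2 * integral {a..b} (\<lambda>x. (f x)\<^sup>2)) \<longlongrightarrow> (pi / (b - a))\<^sup>2 * integral {a..b} (\<lambda>x. (f x)\<^sup>2))
      (at_left (pi / (b - a)))"
    by (intro tendsto_intros)
  moreover have "\<forall>\<^sub>F k in at_left (pi / (b - a)).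
      k\<^sup>2 * integral {a..b} (\<lambda>x. (f x)\<^sup>2) \<le> integral {a..b} (\<lambda>x. (f' x)\<^sup>2)"
    using eventually_at_left_real[of 0 "pi / (b - a)"] \<open>a < b\<close>
    by (auto elim!: eventually_mono intro!: wirtinger_inequality_below_optimal[OF assms])
  ultimately show ?thesis
    by (rule tendsto_le[OF trivial_limit_at_left_real tendsto_const])
qed

lemma sq_le_integral_abs_mult_deriv:
  fixes f f' :: "real \<Rightarrow> real"
  assumes "x \<in> {a..b}"
    and f': "\<And>s. s \<in> {a..b} \<Longrightarrow> (f has_real_derivative f' s) (at s within {a..b})"
    and "continuous_on {a..b} f'" and "f a = 0" "f b = 0"
  shows "(f x)\<^sup>2 \<le> integral {a..b} (\<lambda>s. \<bar>f s * f' s\<bar>)"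
proof -
  text \<open>\<open>(f x)\<^sup>2\<close> is the integral of \<open>(f\<^sup>2)' = 2 f f'\<close> both from \<open>a\<close> and (with a minus sign) from \<open>b\<close>.\<close>
  have cont: "continuous_on {a..b} (\<lambda>s. \<bar>f s * f' s\<bar>)"
    using DERIV_continuous_on[OF f'] assms(3) by (intro continuous_intros)
  have ftc: "((\<lambda>s. 2 * f s * f' s) has_integral (f v)\<^sup>2 - (f u)\<^sup>2) {u..v}"
    if "a \<le> u" "u \<le> v" "v \<le> b" for u v
  proof (rule fundamental_theorem_of_calculus[OF \<open>u \<le> v\<close>])
    fix s assume "s \<in> {u..v}"
    with that have "(f has_real_derivative f' s) (at s within {u..v})"
      by (intro DERIV_subset[OF f']) auto
    then have "((\<lambda>s. (f s)\<^sup>2) has_real_derivative 2 * f s * f' s) (at s within {u..v})"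
      by (auto intro!: derivative_eq_intros)
    then show "((\<lambda>s. (f s)\<^sup>2) has_vector_derivative 2 * f s * f' s) (at s within {u..v})"
      by (simp add: has_real_derivative_iff_has_vector_derivative)
  qed
  have half_bound: "\<bar>(f v)\<^sup>2 - (f u)\<^sup>2\<bar> \<le> 2 * integral {u..v} (\<lambda>s. \<bar>f s * f' s\<bar>)"
    if "a \<le> u" "u \<le> v" "v \<le> b" for u v
  proof -
    have "(\<lambda>s. \<bar>f s * f' s\<bar>) integrable_on {u..v}"
      using that by (intro integrable_continuous_interval continuous_on_subset[OF cont]) auto
    then have "norm (integral {u..v} (\<lambda>s. 2 * f s * f' s)) \<le> integral {u..v} (\<lambda>s. 2 * \<bar>f s * f' s\<bar>)"
      using ftc[OF that] by (intro integral_norm_bound_integral) (auto simp: abs_mult intro: integrable_on_mult_right)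
    then show ?thesis
      using integral_unique[OF ftc[OF that]] by simp
  qed
  have "integral {a..x} (\<lambda>s. \<bar>f s * f' s\<bar>) + integral {x..b} (\<lambda>s. \<bar>f s * f' s\<bar>)
      = integral {a..b} (\<lambda>s. \<bar>f s * f' s\<bar>)"
    using assms(1) cont by (intro Henstock_Kurzweil_Integration.integral_combine integrable_continuous_interval) auto
  then show ?thesis
    using half_bound[of a x] half_bound[of x b] assms(1,4,5) by auto
qed

lemma sq_le_mult_if_quadratic_nonneg:
  fixes n p a :: real
  assumes "0 \<le> n" and quadratic: "\<And>l. 0 \<le> n * l\<^sup>2 - 2 * p * l + a"
  shows "p\<^sup>2 \<le> n * a"
proof (cases "n = 0")
  case True
  have "p = 0"
  proof (rule ccontr)
    assume "p \<noteq> 0"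
    then show False
      using quadratic[of "(a + 1) / (2 * p)"] True by (simp add: field_simps)
  qed
  with True show ?thesis
    by simp
next
  case False
  with assms(1) have "0 < n"
    by simp
  then show ?thesis
    using quadratic[of "p / n"] by (simp add: field_simps power2_eq_square)
qed

lemma Cauchy_Schwarz_integral:
  fixes f g :: "'a::euclidean_space \<Rightarrow> real"
  assumes "(\<lambda>z. (f z)\<^sup>2) integrable_on S" "(\<lambda>z. (g z)\<^sup>2) integrable_on S"
    and "(\<lambda>z. \<bar>f z * g z\<bar>) integrable_on S"
  shows "(integral S (\<lambda>z. \<bar>f z * g z\<bar>))\<^sup>2 \<le> integral S (\<lambda>z. (f z)\<^sup>2) * integral S (\<lambda>z. (g z)\<^sup>2)"
proof (rule sq_le_mult_if_quadratic_nonneg)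
  show "0 \<le> integral S (\<lambda>z. (f z)\<^sup>2)"
    using assms(1) by (rule integral_nonneg) simp
  fix l :: real
  have "(\<lambda>z. (l * \<bar>f z\<bar> - \<bar>g z\<bar>)\<^sup>2) = (\<lambda>z. l\<^sup>2 * (f z)\<^sup>2 - 2 * l * \<bar>f z * g z\<bar> + (g z)\<^sup>2)"
    by (simp add: fun_eq_iff power2_eq_square abs_mult algebra_simps)
  moreover have "((\<lambda>z. l\<^sup>2 * (f z)\<^sup>2 - 2 * l * \<bar>f z * g z\<bar> + (g z)\<^sup>2) has_integral
      l\<^sup>2 * integral S (\<lambda>z. (f z)\<^sup>2) - 2 * l * integral S (\<lambda>z. \<bar>f z * g z\<bar>) + integral S (\<lambda>z. (g z)\<^sup>2)) S"
    by (intro has_integral_add has_integral_diff has_integral_mult_right integrable_integral assms)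
  ultimately have "((\<lambda>z. (l * \<bar>f z\<bar> - \<bar>g z\<bar>)\<^sup>2) has_integral
      l\<^sup>2 * integral S (\<lambda>z. (f z)\<^sup>2) - 2 * l * integral S (\<lambda>z. \<bar>f z * g z\<bar>) + integral S (\<lambda>z. (g z)\<^sup>2)) S"
    by simp
  then have "0 \<le> l\<^sup>2 * integral S (\<lambda>z. (f z)\<^sup>2) - 2 * l * integral S (\<lambda>z. \<bar>f z * g z\<bar>)
      + integral S (\<lambda>z. (g z)\<^sup>2)"
    by (rule has_integral_nonneg) simp
  then show "0 \<le> integral S (\<lambda>z. (f z)\<^sup>2) * l\<^sup>2 - 2 * integral S (\<lambda>z. \<bar>f z * g z\<bar>) * l
      + integral S (\<lambda>z. (g z)\<^sup>2)"
    by (simp add: algebra_simps)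
qed

lemma decay_of_differential_inequality:
  fixes f f' :: "real \<Rightarrow> real"
  assumes "continuous_on {0..} f"
    and f': "\<And>t. t > 0 \<Longrightarrow> (f has_real_derivative f' t) (at t)"
    and bound: "\<And>t. t > 0 \<Longrightarrow> f' t \<le> - c * f t"
    and "t \<ge> 0"
  shows "f t \<le> exp (- c * t) * f 0"
proof (cases "t = 0")
  case False
  with \<open>t \<ge> 0\<close> have "0 < t"
    by simp
  define g where "g s = exp (c * s) * f s" for s
  have g': "(g has_real_derivative exp (c * s) * (c * f s + f' s)) (at s)" if "s > 0" for s
    unfolding g_def using f'[OF that] by (auto intro!: derivative_eq_intros simp: algebra_simps)
  have "continuous_on {0..t} g"
    unfolding g_def by (intro continuous_intros continuous_on_subset[OF assms(1)]) auto
  then obtain l z where z: "0 < z" "z < t" and l: "(g has_real_derivative l) (at z)" "g t - g 0 = (t - 0) * l"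
    using MVT[OF \<open>0 < t\<close>] g' by (meson real_differentiable_def)
  have "l = exp (c * z) * (c * f z + f' z)"
    using DERIV_unique[OF l(1) g'[OF z(1)]] .
  also have "\<dots> \<le> 0"
    using bound[OF z(1)] by (simp add: mult_nonneg_nonpos)
  finally have "g t \<le> g 0"
    using l(2) \<open>0 < t\<close> mult_nonneg_nonpos[of t l] by simp
  then have "exp (- c * t) * (exp (c * t) * f t) \<le> exp (- c * t) * f 0"
    by (simp add: g_def)
  then show ?thesis
    by (simp add: exp_minus field_simps)
qed simp

section \<open>Integration over the rectangle\<close>

lemma rectangle_eq_cbox:
  fixes a b c d :: real
  shows "{a..b} \<times> {c..d} = cbox (a, c) (b, d)"
  unfolding cbox_Pair_eq by (simp only: cbox_interval)

lemma integrable_on_rectangle: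
  fixes g :: "real \<times> real \<Rightarrow> real"
  assumes "continuous_on ({a..b} \<times> {c..d}) g"
  shows "g integrable_on {a..b} \<times> {c..d}"
  using assms unfolding rectangle_eq_cbox by (rule integrable_continuous)

lemma integral_rectangle_x_y:
  fixes g :: "real \<Rightarrow> real \<Rightarrow> real"
  assumes "continuous_on ({a..b} \<times> {c..d}) (\<lambda>z. g (fst z) (snd z))"
  shows "integral ({a..b} \<times> {c..d}) (\<lambda>(x, y). g x y) = integral {a..b} (\<lambda>x. integral {c..d} (\<lambda>y. g x y))"
proof -
  have "continuous_on (cbox (a, c) (b, d)) (\<lambda>(x, y). g x y)"
    using assms by (simp add: rectangle_eq_cbox case_prod_beta')
  from integral_prod_continuous[OF this] show ?thesis
    by (simp add: rectangle_eq_cbox)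
qed

lemma integral_rectangle_y_x:
  fixes g :: "real \<Rightarrow> real \<Rightarrow> real"
  assumes "continuous_on ({a..b} \<times> {c..d}) (\<lambda>z. g (fst z) (snd z))"
  shows "integral ({a..b} \<times> {c..d}) (\<lambda>(x, y). g x y) = integral {c..d} (\<lambda>y. integral {a..b} (\<lambda>x. g x y))"
proof -
  have "continuous_on (cbox (a, c) (b, d)) (\<lambda>(x, y). g x y)"
    using assms by (simp add: rectangle_eq_cbox case_prod_beta')
  from integral_rectangle_x_y[OF assms] integral_swap_continuous[OF this] show ?thesis
    by simp
qed

lemma continuous_on_rectangle_slice_x:
  fixes g :: "real \<Rightarrow> real \<Rightarrow> real"
  assumes "continuous_on ({a..b} \<times> {c..d}) (\<lambda>z. g (fst z) (snd z))" "y \<in> {c..d}"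
  shows "continuous_on {a..b} (\<lambda>x. g x y)"
proof -
  have "continuous_on {a..b} ((\<lambda>z. g (fst z) (snd z)) \<circ> (\<lambda>x. (x, y)))"
    using assms by (intro continuous_on_compose continuous_on_subset[OF assms(1)]) (auto intro!: continuous_intros)
  then show ?thesis
    by (simp add: o_def)
qed

lemma continuous_on_rectangle_slice_y:
  fixes g :: "real \<Rightarrow> real \<Rightarrow> real"
  assumes "continuous_on ({a..b} \<times> {c..d}) (\<lambda>z. g (fst z) (snd z))" "x \<in> {a..b}"
  shows "continuous_on {c..d} (\<lambda>y. g x y)"
proof -
  have "continuous_on {c..d} ((\<lambda>z. g (fst z) (snd z)) \<circ> (\<lambda>y. (x, y)))"
    using assms by (intro continuous_on_compose continuous_on_subset[OF assms(1)]) (auto intro!: continuous_intros)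
  then show ?thesis
    by (simp add: o_def)
qed

lemma continuous_on_integral_y:
  fixes g :: "real \<Rightarrow> real \<Rightarrow> real"
  assumes "continuous_on ({a..b} \<times> {c..d}) (\<lambda>z. g (fst z) (snd z))"
  shows "continuous_on {a..b} (\<lambda>x. integral {c..d} (\<lambda>y. g x y))"
  using integral_continuous_on_param[of "{a..b}" c d g] assms by (simp add: case_prod_beta')

lemma continuous_on_integral_x:
  fixes g :: "real \<Rightarrow> real \<Rightarrow> real"
  assumes "continuous_on ({a..b} \<times> {c..d}) (\<lambda>z. g (fst z) (snd z))"
  shows "continuous_on {c..d} (\<lambda>y. integral {a..b} (\<lambda>x. g x y))"
proof -
  have "continuous_on ({c..d} \<times> {a..b}) ((\<lambda>z. g (fst z) (snd z)) \<circ> prod.swap)"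
    by (intro continuous_on_compose continuous_on_subset[OF assms]) (auto intro!: continuous_intros)
  then show ?thesis
    using integral_continuous_on_param[of "{c..d}" a b "\<lambda>y x. g x y"] by (simp add: case_prod_beta' o_def)
qed

lemma has_integral_rectangle_partial_x:
  fixes P P' :: "real \<Rightarrow> real \<Rightarrow> real"
  assumes "a \<le> b" and "continuous_on ({a..b} \<times> {c..d}) (\<lambda>z. P' (fst z) (snd z))"
    and "\<And>x y. x \<in> {a..b} \<Longrightarrow> y \<in> {c..d} \<Longrightarrow> ((\<lambda>s. P s y) has_real_derivative P' x y) (at x within {a..b})"
  shows "((\<lambda>(x, y). P' x y) has_integral integral {c..d} (\<lambda>y. P b y - P a y)) ({a..b} \<times> {c..d})"
proof -
  have "integral {a..b} (\<lambda>x. P' x y) = P b y - P a y" if "y \<in> {c..d}" for y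
    using assms(1) assms(3)[OF _ that]
    by (intro integral_unique fundamental_theorem_of_calculus)
       (auto simp: has_real_derivative_iff_has_vector_derivative)
  then have "integral ({a..b} \<times> {c..d}) (\<lambda>(x, y). P' x y) = integral {c..d} (\<lambda>y. P b y - P a y)"
    using integral_rectangle_y_x[OF assms(2)] by (auto intro: integral_cong)
  moreover have "(\<lambda>(x, y). P' x y) integrable_on {a..b} \<times> {c..d}"
    using assms(2) by (intro integrable_on_rectangle) (simp add: case_prod_beta')
  ultimately show ?thesis
    by (metis integrable_integral)
qed

lemma has_integral_rectangle_partial_y:
  fixes P P' :: "real \<Rightarrow> real \<Rightarrow> real"
  assumes "c \<le> d" and "continuous_on ({a..b} \<times> {c..d}) (\<lambda>z. P' (fst z) (snd z))"
    and "\<And>x y. x \<in> {a..b} \<Longrightarrow> y \<in> {c..d} \<Longrightarrow> ((\<lambda>s. P x s) has_real_derivative P' x y) (at y within {c..d})"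
  shows "((\<lambda>(x, y). P' x y) has_integral integral {a..b} (\<lambda>x. P x d - P x c)) ({a..b} \<times> {c..d})"
proof -
  have "integral {c..d} (\<lambda>y. P' x y) = P x d - P x c" if "x \<in> {a..b}" for x
    using assms(1) assms(3)[OF that]
    by (intro integral_unique fundamental_theorem_of_calculus)
       (auto simp: has_real_derivative_iff_has_vector_derivative)
  then have "integral ({a..b} \<times> {c..d}) (\<lambda>(x, y). P' x y) = integral {a..b} (\<lambda>x. P x d - P x c)"
    using integral_rectangle_x_y[OF assms(2)] by (auto intro: integral_cong)
  moreover have "(\<lambda>(x, y). P' x y) integrable_on {a..b} \<times> {c..d}"
    using assms(2) by (intro integrable_on_rectangle) (simp add: case_prod_beta')
  ultimately show ?thesis
    by (metis integrable_integral)
qed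

lemma integral_rectangle_cong_interior:
  fixes f g :: "real \<Rightarrow> real \<Rightarrow> real"
  assumes "\<And>x y. a < x \<Longrightarrow> x < b \<Longrightarrow> c < y \<Longrightarrow> y < d \<Longrightarrow> f x y = g x y"
  shows "integral ({a..b} \<times> {c..d}) (\<lambda>(x, y). f x y) = integral ({a..b} \<times> {c..d}) (\<lambda>(x, y). g x y)"
  unfolding rectangle_eq_cbox
proof (rule integral_spike[OF negligible_frontier_interval])
  fix z assume "z \<in> cbox (a, c) (b, d) - (cbox (a, c) (b, d) - box (a, c) (b, d))"
  then show "(\<lambda>(x, y). g x y) z = (\<lambda>(x, y). f x y) z"
    using assms by (cases z) (auto simp: mem_box Basis_prod_def inner_prod_def)
qed

lemma has_real_derivative_vanishing_function:
  fixes f :: "real \<Rightarrow> real"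
  assumes "a < b" "x \<in> {a..b}" "\<And>s. s \<in> {a..b} \<Longrightarrow> f s = 0"
    and "(f has_real_derivative D) (at x within {a..b})"
  shows "D = 0"
proof -
  have "(f has_real_derivative 0) (at x within {a..b})"
    using assms(2,3) by (intro has_field_derivative_transform_within[OF DERIV_const zero_less_one]) auto
  with assms(1,2,4) show ?thesis
    by (intro vector_derivative_unique_within_closed_interval[of a b x f])
       (auto simp: has_real_derivative_iff_has_vector_derivative)
qed

lemma sqnorm_nonneg:
  assumes "continuous_on ({0..L} \<times> {-B..B}) (\<lambda>z. w (fst z) (snd z))"
  shows "0 \<le> sqnorm L B w"
  unfolding sqnorm_def using assms
  by (intro integral_nonneg integrable_on_rectangle) (auto simp: case_prod_beta' intro!: continuous_intros)

lemma sqnorm_le_wnorm: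
  assumes "continuous_on ({0..L} \<times> {-B..B}) (\<lambda>z. w (fst z) (snd z))"
  shows "sqnorm L B w \<le> wnorm L B w"
proof -
  have "(w x y)\<^sup>2 \<le> (1 + x) * (w x y)\<^sup>2" if "0 \<le> x" for x y
    using mult_right_mono[of 1 "1 + x" "(w x y)\<^sup>2"] that by simp
  then show ?thesis
    unfolding sqnorm_def wnorm_def using assms
    by (intro integral_le integrable_on_rectangle) (auto simp: case_prod_beta' intro!: continuous_intros)
qed

lemma wnorm_le_sqnorm:
  assumes "continuous_on ({0..L} \<times> {-B..B}) (\<lambda>z. w (fst z) (snd z))"
  shows "wnorm L B w \<le> (1 + L) * sqnorm L B w"
proof -
  have "wnorm L B w \<le> integral ({0..L} \<times> {-B..B}) (\<lambda>(x, y). (1 + L) * (w x y)\<^sup>2)"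
    unfolding wnorm_def using assms
    by (intro integral_le integrable_on_rectangle) (auto simp: case_prod_beta' intro!: continuous_intros mult_right_mono)
  then show ?thesis
    by (simp add: sqnorm_def case_prod_beta')
qed

lemma has_integral_sqnorm:
  assumes "continuous_on ({0..L} \<times> {-B..B}) (\<lambda>z. w (fst z) (snd z))"
  shows "((\<lambda>(x, y). (w x y)\<^sup>2) has_integral sqnorm L B w) ({0..L} \<times> {-B..B})"
  unfolding sqnorm_def using assms
  by (intro integrable_integral integrable_on_rectangle) (auto simp: case_prod_beta' intro!: continuous_intros)

section \<open>Energy identities at a fixed time\<close>

locale zk_profile =
  fixes L B :: real and U Ux Uxx Uxxx Uy Uyy Uxy Uxyy :: "real \<Rightarrow> real \<Rightarrow> real"
  assumes L_pos: "0 < L" and B_pos: "0 < B"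
    and continuous: "\<And>V. V \<in> {U, Ux, Uxx, Uxxx, Uy, Uyy, Uxy, Uxyy} \<Longrightarrow>
        continuous_on ({0..L} \<times> {-B..B}) (\<lambda>z. V (fst z) (snd z))"
    and U_x: "\<And>x y. x \<in> {0..L} \<Longrightarrow> y \<in> {-B..B} \<Longrightarrow> ((\<lambda>s. U s y) has_real_derivative Ux x y) (at x within {0..L})"
    and Ux_x: "\<And>x y. x \<in> {0..L} \<Longrightarrow> y \<in> {-B..B} \<Longrightarrow> ((\<lambda>s. Ux s y) has_real_derivative Uxx x y) (at x within {0..L})"
    and Uxx_x: "\<And>x y. x \<in> {0..L} \<Longrightarrow> y \<in> {-B..B} \<Longrightarrow> ((\<lambda>s. Uxx s y) has_real_derivative Uxxx x y) (at x within {0..L})"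
    and U_y: "\<And>x y. x \<in> {0..L} \<Longrightarrow> y \<in> {-B..B} \<Longrightarrow> ((\<lambda>s. U x s) has_real_derivative Uy x y) (at y within {-B..B})"
    and Uy_y: "\<And>x y. x \<in> {0..L} \<Longrightarrow> y \<in> {-B..B} \<Longrightarrow> ((\<lambda>s. Uy x s) has_real_derivative Uyy x y) (at y within {-B..B})"
    and Ux_y: "\<And>x y. x \<in> {0..L} \<Longrightarrow> y \<in> {-B..B} \<Longrightarrow> ((\<lambda>s. Ux x s) has_real_derivative Uxy x y) (at y within {-B..B})"
    and Uy_x: "\<And>x y. x \<in> {0..L} \<Longrightarrow> y \<in> {-B..B} \<Longrightarrow> ((\<lambda>s. Uy s y) has_real_derivative Uxy x y) (at x within {0..L})"
    and Uyy_x: "\<And>x y. x \<in> {0..L} \<Longrightarrow> y \<in> {-B..B} \<Longrightarrow> ((\<lambda>s. Uyy s y) has_real_derivative Uxyy x y) (at x within {0..L})"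
    and U_bottom_top: "\<And>x. x \<in> {0..L} \<Longrightarrow> U x (-B) = 0 \<and> U x B = 0"
    and U_left_right: "\<And>y. y \<in> {-B..B} \<Longrightarrow> U 0 y = 0 \<and> U L y = 0 \<and> Ux L y = 0"
begin

abbreviation \<Omega> :: "(real \<times> real) set" where
  "\<Omega> \<equiv> {0..L} \<times> {-B..B}"

lemma continuous_on_partials:
  "continuous_on \<Omega> (\<lambda>z. U (fst z) (snd z))" "continuous_on \<Omega> (\<lambda>z. Ux (fst z) (snd z))"
  "continuous_on \<Omega> (\<lambda>z. Uxx (fst z) (snd z))" "continuous_on \<Omega> (\<lambda>z. Uxxx (fst z) (snd z))"
  "continuous_on \<Omega> (\<lambda>z. Uy (fst z) (snd z))" "continuous_on \<Omega> (\<lambda>z. Uyy (fst z) (snd z))"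
  "continuous_on \<Omega> (\<lambda>z. Uxy (fst z) (snd z))" "continuous_on \<Omega> (\<lambda>z. Uxyy (fst z) (snd z))"
  by (simp_all add: continuous)

lemma Uy_left_right: "y \<in> {-B..B} \<Longrightarrow> Uy 0 y = 0 \<and> Uy L y = 0"
  using L_pos B_pos U_left_right U_y
  by (auto intro: has_real_derivative_vanishing_function[of "-B" B y "\<lambda>s. U 0 s"]
                  has_real_derivative_vanishing_function[of "-B" B y "\<lambda>s. U L s"])

lemma Ux_bottom_top: "x \<in> {0..L} \<Longrightarrow> Ux x (-B) = 0 \<and> Ux x B = 0"
  using L_pos B_pos U_bottom_top U_x
  by (auto intro: has_real_derivative_vanishing_function[of 0 L x "\<lambda>s. U s (-B)"]
                  has_real_derivative_vanishing_function[of 0 L x "\<lambda>s. U s B"])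

text \<open>The equation says \<open>u\<^sub>t = - zk_operator\<close> in the interior.\<close>

definition zk_operator :: "real \<Rightarrow> real \<Rightarrow> real" where
  "zk_operator x y = Ux x y + (U x y)\<^sup>2 * Ux x y + Uxxx x y + Uxyy x y"

definition quartic :: real where
  "quartic = integral \<Omega> (\<lambda>(x, y). (U x y) ^ 4)"

definition outflow :: real where
  "outflow = integral {-B..B} (\<lambda>y. (Ux 0 y)\<^sup>2)"

lemma outflow_nonneg: "0 \<le> outflow"
  unfolding outflow_def using L_pos
  by (intro integral_nonneg integrable_continuous_interval continuous_intros
      continuous_on_rectangle_slice_y[OF continuous_on_partials(2)]) auto

text \<open>Multiplying the equation by \<open>2 (c + d x) u\<close> turns every third-order term into a divergence
  \<open>\<partial>\<^sub>x flux_x + \<partial>\<^sub>y flux_y\<close> plus lower-order terms; \<open>c = 1, d = 0\<close> gives the identity for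
  \<open>\<parallel>u\<parallel>\<^sup>2\<close> and \<open>c = d = 1\<close> the one for \<open>(1+x,u\<^sup>2)\<close>.\<close>

definition flux_x :: "real \<Rightarrow> real \<Rightarrow> real \<Rightarrow> real \<Rightarrow> real" where
  "flux_x c d x y = (c + d * x) * ((U x y)\<^sup>2 + (U x y) ^ 4 / 2 + 2 * U x y * Uxx x y - (Ux x y)\<^sup>2
     + 2 * U x y * Uyy x y + (Uy x y)\<^sup>2) - 2 * d * U x y * Ux x y"

definition flux_y :: "real \<Rightarrow> real \<Rightarrow> real \<Rightarrow> real \<Rightarrow> real" where
  "flux_y c d x y = 2 * d * U x y * Uy x y + 2 * (c + d * x) * Ux x y * Uy x y"

definition flux_y_dy :: "real \<Rightarrow> real \<Rightarrow> real \<Rightarrow> real \<Rightarrow> real" where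
  "flux_y_dy c d x y = 2 * d * ((Uy x y)\<^sup>2 + U x y * Uyy x y) + 2 * (c + d * x) * (Uxy x y * Uy x y + Ux x y * Uyy x y)"

lemma has_real_derivative_flux_y:
  "x \<in> {0..L} \<Longrightarrow> y \<in> {-B..B} \<Longrightarrow>
    ((\<lambda>s. flux_y c d x s) has_real_derivative flux_y_dy c d x y) (at y within {-B..B})"
  unfolding flux_y_def flux_y_dy_def
  by (auto intro!: derivative_eq_intros U_y Uy_y Ux_y simp: algebra_simps power2_eq_square)

lemma has_real_derivative_flux_x:
  "x \<in> {0..L} \<Longrightarrow> y \<in> {-B..B} \<Longrightarrow>
    ((\<lambda>s. flux_x c d s y) has_real_derivative
      2 * (c + d * x) * U x y * zk_operator x y
      + d * ((U x y)\<^sup>2 + (U x y) ^ 4 / 2 - 3 * (Ux x y)\<^sup>2 - (Uy x y)\<^sup>2) + flux_y_dy c d x y) (at x within {0..L})"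
  unfolding flux_x_def flux_y_dy_def zk_operator_def
  by (auto intro!: derivative_eq_intros U_x Ux_x Uxx_x Uy_x Uyy_x
      simp: algebra_simps power2_eq_square power3_eq_cube power4_eq_xxxx)

lemma continuous_on_zk_operator: "continuous_on \<Omega> (\<lambda>z. zk_operator (fst z) (snd z))"
  unfolding zk_operator_def by (intro continuous_intros continuous_on_partials)

lemma continuous_on_flux_y_dy: "continuous_on \<Omega> (\<lambda>z. flux_y_dy c d (fst z) (snd z))"
  unfolding flux_y_dy_def by (intro continuous_intros continuous_on_partials)

lemma has_integral_flux_y_dy: "((\<lambda>(x, y). flux_y_dy c d x y) has_integral 0) \<Omega>"
proof -
  have "integral {0..L} (\<lambda>x. flux_y c d x B - flux_y c d x (-B)) = 0"
    using U_bottom_top Ux_bottom_top by (subst integral_cong[where g = "\<lambda>_. 0"]) (auto simp: flux_y_def)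
  then show ?thesis
    using has_integral_rectangle_partial_y[where a = 0 and b = L and c = "-B" and d = B and P = "flux_y c d",
        OF _ continuous_on_flux_y_dy has_real_derivative_flux_y] B_pos
    by simp
qed

lemma has_integral_quartic: "((\<lambda>(x, y). (U x y) ^ 4) has_integral quartic) \<Omega>"
  unfolding quartic_def
  by (intro integrable_integral integrable_on_rectangle)
     (auto simp: case_prod_beta' intro!: continuous_intros continuous_on_partials)

lemma has_integral_lower_order_terms:
  "((\<lambda>(x, y). (U x y)\<^sup>2 + (U x y) ^ 4 / 2 - 3 * (Ux x y)\<^sup>2 - (Uy x y)\<^sup>2) has_integral
     sqnorm L B U + quartic / 2 - 3 * sqnorm L B Ux - sqnorm L B Uy) \<Omega>"
  using has_integral_diff[OF has_integral_diff[OF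
      has_integral_add[OF has_integral_sqnorm has_integral_divide[where c = 2, OF has_integral_quartic]]
      has_integral_mult_right[where c = 3, OF has_integral_sqnorm]] has_integral_sqnorm]
    continuous_on_partials
  by (simp add: case_prod_beta')

lemma energy_identity:
  "integral \<Omega> (\<lambda>(x, y). 2 * (c + d * x) * U x y * zk_operator x y)
     = c * outflow + d * (3 * sqnorm L B Ux + sqnorm L B Uy - sqnorm L B U - quartic / 2)"
proof -
  have boundary: "integral {-B..B} (\<lambda>y. flux_x c d L y - flux_x c d 0 y) = c * outflow"
    unfolding outflow_def
    by (subst integral_mult_right[symmetric], rule integral_cong)
       (use U_left_right Uy_left_right in \<open>auto simp: flux_x_def power2_eq_square\<close>)
  have "((\<lambda>(x, y). 2 * (c + d * x) * U x y * zk_operator x y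
      + d * ((U x y)\<^sup>2 + (U x y) ^ 4 / 2 - 3 * (Ux x y)\<^sup>2 - (Uy x y)\<^sup>2) + flux_y_dy c d x y)
      has_integral c * outflow) \<Omega>"
    using has_integral_rectangle_partial_x[where a = 0 and b = L and c = "-B" and d = B and P = "flux_x c d" and P' = "\<lambda>x y.
        2 * (c + d * x) * U x y * zk_operator x y
        + d * ((U x y)\<^sup>2 + (U x y) ^ 4 / 2 - 3 * (Ux x y)\<^sup>2 - (Uy x y)\<^sup>2) + flux_y_dy c d x y",
        OF _ _ has_real_derivative_flux_x] L_pos boundary
    by (simp add: continuous_intros continuous_on_partials continuous_on_zk_operator continuous_on_flux_y_dy)
  from has_integral_diff[OF has_integral_diff[OF this has_integral_flux_y_dy[of c d]]
      has_integral_mult_right[where c = d, OF has_integral_lower_order_terms]]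
  have "((\<lambda>(x, y). 2 * (c + d * x) * U x y * zk_operator x y) has_integral
      c * outflow - 0 - d * (sqnorm L B U + quartic / 2 - 3 * sqnorm L B Ux - sqnorm L B Uy)) \<Omega>"
    by (simp add: case_prod_beta')
  then show ?thesis
    by (simp add: integral_unique algebra_simps)
qed

lemma wirtinger_x: "(pi / L)\<^sup>2 * sqnorm L B U \<le> sqnorm L B Ux"
proof -
  have "(pi / L)\<^sup>2 * sqnorm L B U = integral {-B..B} (\<lambda>y. (pi / L)\<^sup>2 * integral {0..L} (\<lambda>x. (U x y)\<^sup>2))"
    unfolding sqnorm_def by (simp add: integral_rectangle_y_x continuous_intros continuous_on_partials)
  also have "\<dots> \<le> integral {-B..B} (\<lambda>y. integral {0..L} (\<lambda>x. (Ux x y)\<^sup>2))"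
  proof (rule integral_le)
    fix y assume y: "y \<in> {-B..B}"
    show "(pi / L)\<^sup>2 * integral {0..L} (\<lambda>x. (U x y)\<^sup>2) \<le> integral {0..L} (\<lambda>x. (Ux x y)\<^sup>2)"
      using wirtinger_inequality[of 0 L "\<lambda>s. U s y" "\<lambda>s. Ux s y"] L_pos U_x[OF _ y] U_left_right[OF y]
        continuous_on_rectangle_slice_x[OF continuous_on_partials(2) y]
      by simp
  qed (intro integrable_on_mult_right integrable_continuous_interval continuous_on_integral_x continuous_intros
      continuous_on_partials)+
  also have "\<dots> = sqnorm L B Ux"
    unfolding sqnorm_def by (simp add: integral_rectangle_y_x continuous_intros continuous_on_partials)
  finally show ?thesis .
qed

lemma wirtinger_y: "(pi / (2 * B))\<^sup>2 * sqnorm L B U \<le> sqnorm L B Uy"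
proof -
  have "(pi / (2 * B))\<^sup>2 * sqnorm L B U
      = integral {0..L} (\<lambda>x. (pi / (2 * B))\<^sup>2 * integral {-B..B} (\<lambda>y. (U x y)\<^sup>2))"
    unfolding sqnorm_def by (simp add: integral_rectangle_x_y continuous_intros continuous_on_partials)
  also have "\<dots> \<le> integral {0..L} (\<lambda>x. integral {-B..B} (\<lambda>y. (Uy x y)\<^sup>2))"
  proof (rule integral_le)
    fix x assume x: "x \<in> {0..L}"
    show "(pi / (2 * B))\<^sup>2 * integral {-B..B} (\<lambda>y. (U x y)\<^sup>2) \<le> integral {-B..B} (\<lambda>y. (Uy x y)\<^sup>2)"
      using wirtinger_inequality[of "-B" B "\<lambda>s. U x s" "\<lambda>s. Uy x s"] B_pos U_y[OF x] U_bottom_top[OF x]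
        continuous_on_rectangle_slice_y[OF continuous_on_partials(5) x]
      by simp
  qed (intro integrable_on_mult_right integrable_continuous_interval continuous_on_integral_y continuous_intros
      continuous_on_partials)+
  also have "\<dots> = sqnorm L B Uy"
    unfolding sqnorm_def by (simp add: integral_rectangle_x_y continuous_intros continuous_on_partials)
  finally show ?thesis .
qed

text \<open>Ladyzhenskaya's argument: \<open>U\<^sup>2\<close> is bounded by \<open>\<integral>|U U\<^sub>x| dx\<close> on horizontal lines and by
  \<open>\<integral>|U U\<^sub>y| dy\<close> on vertical lines, so \<open>U\<^sup>4\<close> is bounded by a product of a function of \<open>y\<close>
  and a function of \<open>x\<close>.\<close>

lemma quartic_le_product:
  "quartic \<le> integral \<Omega> (\<lambda>(x, y). \<bar>U x y * Ux x y\<bar>) * integral \<Omega> (\<lambda>(x, y). \<bar>U x y * Uy x y\<bar>)"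
proof -
  define F where "F y = integral {0..L} (\<lambda>s. \<bar>U s y * Ux s y\<bar>)" for y
  define G where "G x = integral {-B..B} (\<lambda>s. \<bar>U x s * Uy x s\<bar>)" for x
  have cont_x: "continuous_on \<Omega> (\<lambda>z. \<bar>U (fst z) (snd z) * Ux (fst z) (snd z)\<bar>)"
    and cont_y: "continuous_on \<Omega> (\<lambda>z. \<bar>U (fst z) (snd z) * Uy (fst z) (snd z)\<bar>)"
    and cont_4: "continuous_on \<Omega> (\<lambda>z. (U (fst z) (snd z)) ^ 4)"
    by (intro continuous_intros continuous_on_partials)+
  have pointwise: "(U x y) ^ 4 \<le> G x * F y" if "x \<in> {0..L}" "y \<in> {-B..B}" for x y
  proof -
    have "(U x y)\<^sup>2 \<le> F y"
      unfolding F_def using that U_x U_left_right continuous_on_rectangle_slice_x[OF continuous_on_partials(2)]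
      by (intro sq_le_integral_abs_mult_deriv) auto
    moreover have "(U x y)\<^sup>2 \<le> G x"
      unfolding G_def using that U_y U_bottom_top continuous_on_rectangle_slice_y[OF continuous_on_partials(5)]
      by (intro sq_le_integral_abs_mult_deriv) auto
    ultimately have "(U x y)\<^sup>2 * (U x y)\<^sup>2 \<le> G x * F y"
      by (meson mult_mono order_trans zero_le_power2)
    then show ?thesis
      by (simp add: power2_eq_square power4_eq_xxxx)
  qed
  have "quartic = integral {0..L} (\<lambda>x. integral {-B..B} (\<lambda>y. (U x y) ^ 4))"
    unfolding quartic_def using integral_rectangle_x_y[OF cont_4] by simp
  also have "\<dots> \<le> integral {0..L} (\<lambda>x. G x * integral {-B..B} F)"
  proof (rule integral_le)
    fix x assume x: "x \<in> {0..L}"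
    have "integral {-B..B} (\<lambda>y. (U x y) ^ 4) \<le> integral {-B..B} (\<lambda>y. G x * F y)"
      using x pointwise unfolding F_def
      by (intro integral_le integrable_on_mult_right integrable_continuous_interval
          continuous_on_rectangle_slice_y[OF cont_4, simplified] continuous_on_integral_x[OF cont_x, simplified]) auto
    then show "integral {-B..B} (\<lambda>y. (U x y) ^ 4) \<le> G x * integral {-B..B} F"
      by simp
  next
    show "(\<lambda>x. integral {-B..B} (\<lambda>y. (U x y) ^ 4)) integrable_on {0..L}"
      by (intro integrable_continuous_interval continuous_on_integral_y cont_4)
    show "(\<lambda>x. G x * integral {-B..B} F) integrable_on {0..L}"
      unfolding G_def by (intro integrable_on_mult_left integrable_continuous_interval continuous_on_integral_y cont_y)
  qed
  also have "\<dots> = integral {0..L} G * integral {-B..B} F"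
    by simp
  finally show ?thesis
    unfolding F_def G_def using integral_rectangle_x_y[OF cont_y] integral_rectangle_y_x[OF cont_x]
    by (simp add: mult.commute)
qed

lemma quartic_le: "quartic \<le> sqnorm L B U * (sqnorm L B Ux + sqnorm L B Uy) / 2"
proof -
  define I\<^sub>x where "I\<^sub>x = integral \<Omega> (\<lambda>(x, y). \<bar>U x y * Ux x y\<bar>)"
  define I\<^sub>y where "I\<^sub>y = integral \<Omega> (\<lambda>(x, y). \<bar>U x y * Uy x y\<bar>)"
  have "I\<^sub>x\<^sup>2 \<le> sqnorm L B U * sqnorm L B Ux" "I\<^sub>y\<^sup>2 \<le> sqnorm L B U * sqnorm L B Uy"
    unfolding I\<^sub>x_def I\<^sub>y_def sqnorm_def case_prod_beta'
    by (intro Cauchy_Schwarz_integral integrable_on_rectangle continuous_intros continuous_on_partials)+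
  moreover have "I\<^sub>x * I\<^sub>y \<le> (I\<^sub>x\<^sup>2 + I\<^sub>y\<^sup>2) / 2"
    using sum_squares_bound[of I\<^sub>x I\<^sub>y] by simp
  ultimately show ?thesis
    using quartic_le_product unfolding I\<^sub>x_def I\<^sub>y_def by (simp add: algebra_simps)
qed

end

section \<open>Decay of the weighted mass\<close>

text \<open>In the application \<open>N, N\<^sub>x, N\<^sub>y, Q, F\<close> are \<open>\<parallel>u\<parallel>\<^sup>2, \<parallel>u\<^sub>x\<parallel>\<^sup>2, \<parallel>u\<^sub>y\<parallel>\<^sup>2, \<integral>u\<^sup>4\<close> and
  \<open>\<integral>u\<^sub>x(0,y)\<^sup>2 dy\<close> at a fixed time, \<open>M = \<parallel>u\<^sub>0\<parallel>\<^sup>2\<close>, and \<open>k\<^sub>x = (\<pi>/L)\<^sup>2\<close>, \<open>k\<^sub>y = (\<pi>/2B)\<^sup>2\<close>.\<close>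

lemma weighted_energy_rate_le:
  fixes kx ky A M N Nx Ny Q F :: real
  assumes A: "2 * A\<^sup>2 = 3 * kx + ky - 1" and M: "M < A\<^sup>2 / (2 * (kx + ky))"
    and "0 < kx" "0 \<le> ky" "0 \<le> N" "N \<le> M"
    and Nx: "kx * N \<le> Nx" and Ny: "ky * N \<le> Ny" and Q: "Q \<le> N * (Nx + Ny) / 2" and "0 \<le> F"
  shows "N + Q / 2 - F - 3 * Nx - Ny \<le> - A\<^sup>2 * N"
proof -
  have "0 \<le> M"
    using \<open>0 \<le> N\<close> \<open>N \<le> M\<close> by linarith
  have "0 \<le> Nx" "0 \<le> Ny"
    using Nx Ny mult_nonneg_nonneg[of kx N] mult_nonneg_nonneg[of ky N] assms(3-5) by linarith+
  have coercivity: "(1 + 2 * A\<^sup>2) * N \<le> 3 * Nx + Ny"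
  proof -
    have "(1 + 2 * A\<^sup>2) * N = 3 * (kx * N) + ky * N"
      using A by (simp add: algebra_simps)
    then show ?thesis
      using Nx Ny by linarith
  qed
  have "M * (1 + 2 * A\<^sup>2) \<le> M * (3 * (kx + ky))"
    using A \<open>0 \<le> M\<close> \<open>0 \<le> ky\<close> by (intro mult_left_mono) auto
  moreover have "M * (2 * (kx + ky)) < A\<^sup>2"
    using M \<open>0 < kx\<close> \<open>0 \<le> ky\<close> by (simp add: pos_less_divide_eq)
  ultimately have M_small: "2 * M * (1 + 2 * A\<^sup>2) \<le> 3 * A\<^sup>2"
    by (simp add: algebra_simps)
  then have "2 * M * (1 + 2 * A\<^sup>2) \<le> 3 / 2 * (1 + 2 * A\<^sup>2)"
    by (simp add: algebra_simps)
  then have "M \<le> 4"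
    using mult_right_le_imp_le[of "2 * M" "1 + 2 * A\<^sup>2" "3 / 2"] by (simp add: add_pos_nonneg)
  have "2 * Q \<le> M * (3 * Nx + Ny)"
  proof -
    have "2 * Q \<le> N * (Nx + Ny)"
      using Q by simp
    also have "\<dots> \<le> M * (Nx + Ny)"
      using \<open>N \<le> M\<close> \<open>0 \<le> Nx\<close> \<open>0 \<le> Ny\<close> by (intro mult_right_mono) auto
    also have "\<dots> \<le> M * (3 * Nx + Ny)"
      using \<open>0 \<le> M\<close> \<open>0 \<le> Nx\<close> by (intro mult_left_mono) auto
    finally show ?thesis .
  qed
  moreover have "(4 - M) * ((1 + 2 * A\<^sup>2) * N) \<le> (4 - M) * (3 * Nx + Ny)"
    using coercivity \<open>M \<le> 4\<close> by (intro mult_left_mono) auto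
  moreover have "2 * M * (1 + 2 * A\<^sup>2) * N \<le> 3 * A\<^sup>2 * N"
    using M_small \<open>0 \<le> N\<close> by (intro mult_right_mono) auto
  moreover have "0 \<le> A\<^sup>2 * N"
    using \<open>0 \<le> N\<close> by simp
  ultimately have "4 * N + 2 * Q - 4 * F - 12 * Nx - 4 * Ny \<le> - 4 * A\<^sup>2 * N"
    using \<open>0 \<le> F\<close> by (simp add: algebra_simps)
  then show ?thesis
    by simp
qed

lemma continuous_on_time_slice:
  assumes "continuous_on (spacetime L B) (jointly f)" "0 \<le> t"
  shows "continuous_on ({0..L} \<times> {-B..B}) (\<lambda>z. f (fst z) (snd z) t)"
proof -
  have "continuous_on ({0..L} \<times> {-B..B}) (\<lambda>z. jointly f (fst z, snd z, t))"
    using assms by (intro continuous_on_compose2[OF assms(1)]) (auto intro!: continuous_intros simp: spacetime_def)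
  then show ?thesis
    by (simp add: jointly_def)
qed

lemma has_real_derivative_weighted_integral:
  fixes w :: "real \<Rightarrow> real" and u ut :: "real \<Rightarrow> real \<Rightarrow> real \<Rightarrow> real"
  assumes w: "continuous_on UNIV w"
    and u: "continuous_on (spacetime L B) (jointly u)" and ut: "continuous_on (spacetime L B) (jointly ut)"
    and u_t: "\<And>x y t. (x, y, t) \<in> spacetime L B \<Longrightarrow> ((\<lambda>s. u x y s) has_real_derivative ut x y t) (at t within {0..})"
    and "0 \<le> t"
  shows "((\<lambda>t. integral ({0..L} \<times> {-B..B}) (\<lambda>(x, y). w x * (u x y t)\<^sup>2)) has_real_derivative
           integral ({0..L} \<times> {-B..B}) (\<lambda>(x, y). w x * (2 * u x y t * ut x y t))) (at t within {0..})"
proof -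
  have time_first: "continuous_on ({0..} \<times> ({0..L} \<times> {-B..B})) (\<lambda>q. f (fst (snd q)) (snd (snd q)) (fst q))"
    if "continuous_on (spacetime L B) (jointly f)" for f
  proof -
    have "continuous_on ({0..} \<times> ({0..L} \<times> {-B..B})) (\<lambda>q. jointly f (fst (snd q), snd (snd q), fst q))"
      by (rule continuous_on_compose2[OF that]) (auto intro!: continuous_intros simp: spacetime_def)
    then show ?thesis
      by (simp add: jointly_def)
  qed
  have w_comp: "continuous_on S (\<lambda>z. w (h z))" if "continuous_on S h" for S and h :: "'z::topological_space \<Rightarrow> real"
    by (rule continuous_on_compose2[OF w that]) auto
  have "((\<lambda>t. integral (cbox (0, -B) (L, B)) (\<lambda>p. w (fst p) * (u (fst p) (snd p) t)\<^sup>2)) has_field_derivative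
      integral (cbox (0, -B) (L, B)) (\<lambda>p. w (fst p) * (2 * u (fst p) (snd p) t * ut (fst p) (snd p) t)))
      (at t within {0..})"
  proof (rule leibniz_rule_field_derivative)
    fix s :: real and p :: "real \<times> real" assume "s \<in> {0..}" "p \<in> cbox (0, -B) (L, B)"
    then have "(fst p, snd p, s) \<in> spacetime L B"
      by (auto simp: spacetime_def rectangle_eq_cbox[symmetric])
    from u_t[OF this] show "((\<lambda>s. w (fst p) * (u (fst p) (snd p) s)\<^sup>2) has_field_derivative
        w (fst p) * (2 * u (fst p) (snd p) s * ut (fst p) (snd p) s)) (at s within {0..})"
      by (auto intro!: derivative_eq_intros)
  next
    fix s :: real assume "s \<in> {0..}"
    then show "(\<lambda>p. w (fst p) * (u (fst p) (snd p) s)\<^sup>2) integrable_on cbox (0, -B) (L, B)"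
      unfolding rectangle_eq_cbox[symmetric]
      by (intro integrable_on_rectangle continuous_intros continuous_on_time_slice[OF u] w_comp) auto
  next
    show "continuous_on ({0..} \<times> cbox (0, -B) (L, B))
        (\<lambda>(t, p). w (fst p) * (2 * u (fst p) (snd p) t * ut (fst p) (snd p) t))"
      unfolding rectangle_eq_cbox[symmetric] case_prod_beta'
      by (intro continuous_intros time_first[OF u] time_first[OF ut] w_comp)
  qed (use \<open>0 \<le> t\<close> in auto)
  then show ?thesis
    by (simp add: rectangle_eq_cbox case_prod_beta')
qed

text \<open>The conditions of \<open>mzk_solution\<close> with the derivatives named.\<close>

locale mzk_flow =
  fixes L B :: real and u ux uxx uxxx uy uyy uxy uxyy ut :: "real \<Rightarrow> real \<Rightarrow> real \<Rightarrow> real"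
  assumes L_pos: "0 < L" and B_pos: "0 < B"
    and continuous: "\<forall>f \<in> {u, ux, uxx, uxxx, uy, uyy, uxy, uxyy, ut}. continuous_on (spacetime L B) (jointly f)"
    and derivatives: "\<forall>x y t. (x, y, t) \<in> spacetime L B \<longrightarrow>
         ((\<lambda>s. u s y t) has_real_derivative ux x y t) (at x within {0..L}) \<and>
         ((\<lambda>s. ux s y t) has_real_derivative uxx x y t) (at x within {0..L}) \<and>
         ((\<lambda>s. uxx s y t) has_real_derivative uxxx x y t) (at x within {0..L}) \<and>
         ((\<lambda>s. u x s t) has_real_derivative uy x y t) (at y within {-B..B}) \<and>
         ((\<lambda>s. uy x s t) has_real_derivative uyy x y t) (at y within {-B..B}) \<and>
         ((\<lambda>s. ux x s t) has_real_derivative uxy x y t) (at y within {-B..B}) \<and>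
         ((\<lambda>s. uy s y t) has_real_derivative uxy x y t) (at x within {0..L}) \<and>
         ((\<lambda>s. uyy s y t) has_real_derivative uxyy x y t) (at x within {0..L}) \<and>
         ((\<lambda>s. u x y s) has_real_derivative ut x y t) (at t within {0..})"
    and equation: "\<forall>x y t. 0 < x \<and> x < L \<and> -B < y \<and> y < B \<and> 0 < t \<longrightarrow>
         ut x y t + ux x y t + (u x y t)\<^sup>2 * ux x y t + uxxx x y t + uxyy x y t = 0"
    and boundary_y: "\<forall>x t. 0 \<le> x \<and> x \<le> L \<and> 0 \<le> t \<longrightarrow> u x (-B) t = 0 \<and> u x B t = 0"
    and boundary_x: "\<forall>y t. -B \<le> y \<and> y \<le> B \<and> 0 \<le> t \<longrightarrow> u 0 y t = 0 \<and> u L y t = 0 \<and> ux L y t = 0"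

lemma mzk_solutionE:
  assumes "mzk_solution L B u u0" "0 < L" "0 < B"
  obtains ux uxx uxxx uy uyy uxy uxyy ut
  where "mzk_flow L B u ux uxx uxxx uy uyy uxy uxyy ut"
    and "\<forall>x y. 0 \<le> x \<and> x \<le> L \<and> -B \<le> y \<and> y \<le> B \<longrightarrow> u x y 0 = u0 x y"
  using assms unfolding mzk_solution_def
  apply (elim exE conjE)
  subgoal for ux uxx uxxx uy uyy uxy uxyy ut
    by (rule that[of ux uxx uxxx uy uyy uxy uxyy ut]) (simp_all add: mzk_flow_def)
  done

context mzk_flow
begin

lemma zk_profile:
  assumes "0 \<le> t"
  shows "zk_profile L B (\<lambda>x y. u x y t) (\<lambda>x y. ux x y t) (\<lambda>x y. uxx x y t) (\<lambda>x y. uxxx x y t)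
    (\<lambda>x y. uy x y t) (\<lambda>x y. uyy x y t) (\<lambda>x y. uxy x y t) (\<lambda>x y. uxyy x y t)"
proof
  fix V assume "V \<in> {\<lambda>x y. u x y t, \<lambda>x y. ux x y t, \<lambda>x y. uxx x y t, \<lambda>x y. uxxx x y t,
    \<lambda>x y. uy x y t, \<lambda>x y. uyy x y t, \<lambda>x y. uxy x y t, \<lambda>x y. uxyy x y t}"
  then show "continuous_on ({0..L} \<times> {-B..B}) (\<lambda>z. V (fst z) (snd z))"
    using continuous continuous_on_time_slice[OF _ assms] by auto
qed (use L_pos B_pos derivatives boundary_x boundary_y assms in \<open>auto simp: spacetime_def\<close>)

lemma continuous_on_slice: "0 \<le> t \<Longrightarrow> continuous_on ({0..L} \<times> {-B..B}) (\<lambda>z. u (fst z) (snd z) t)"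
  using continuous by (intro continuous_on_time_slice) auto

definition weighted_mass :: "real \<Rightarrow> real \<Rightarrow> real \<Rightarrow> real" where
  "weighted_mass c d t = integral ({0..L} \<times> {-B..B}) (\<lambda>(x, y). (c + d * x) * (u x y t)\<^sup>2)"

lemma sqnorm_eq_weighted_mass: "sqnorm L B (\<lambda>x y. u x y t) = weighted_mass 1 0 t"
  by (simp add: sqnorm_def weighted_mass_def)

lemma wnorm_eq_weighted_mass: "wnorm L B (\<lambda>x y. u x y t) = weighted_mass 1 1 t"
  by (simp add: wnorm_def weighted_mass_def)

lemma has_real_derivative_weighted_mass_within:
  "0 \<le> t \<Longrightarrow> (weighted_mass c d has_real_derivative
    integral ({0..L} \<times> {-B..B}) (\<lambda>(x, y). (c + d * x) * (2 * u x y t * ut x y t))) (at t within {0..})"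
  unfolding weighted_mass_def[abs_def] using continuous derivatives
  by (intro has_real_derivative_weighted_integral[where w = "\<lambda>x. c + d * x"] continuous_intros) auto

lemma continuous_on_weighted_mass: "continuous_on {0..} (weighted_mass c d)"
  using has_real_derivative_weighted_mass_within by (intro DERIV_continuous_on) auto

lemma has_real_derivative_weighted_mass:
  assumes "0 < t"
  shows "(weighted_mass c d has_real_derivative
    - integral ({0..L} \<times> {-B..B}) (\<lambda>(x, y). 2 * (c + d * x) * u x y t *
        (ux x y t + (u x y t)\<^sup>2 * ux x y t + uxxx x y t + uxyy x y t))) (at t)"
proof -
  have "at t within {0..} = at t"
    using assms by (intro at_within_interior) auto
  moreover have "integral ({0..L} \<times> {-B..B}) (\<lambda>(x, y). (c + d * x) * (2 * u x y t * ut x y t))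
      = integral ({0..L} \<times> {-B..B}) (\<lambda>(x, y). - (2 * (c + d * x) * u x y t *
          (ux x y t + (u x y t)\<^sup>2 * ux x y t + uxxx x y t + uxyy x y t)))"
  proof (intro integral_rectangle_cong_interior)
    fix x y assume "0 < x" "x < L" "-B < y" "y < B"
    then have "ut x y t + ux x y t + (u x y t)\<^sup>2 * ux x y t + uxxx x y t + uxyy x y t = 0"
      using equation assms by blast
    then have ut: "ut x y t = - (ux x y t + (u x y t)\<^sup>2 * ux x y t + uxxx x y t + uxyy x y t)"
      by linarith
    show "(c + d * x) * (2 * u x y t * ut x y t)
        = - (2 * (c + d * x) * u x y t * (ux x y t + (u x y t)\<^sup>2 * ux x y t + uxxx x y t + uxyy x y t))"
      unfolding ut by (simp add: algebra_simps)
  qed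
  ultimately show ?thesis
    using has_real_derivative_weighted_mass_within[of t c d] assms by (simp add: case_prod_beta')
qed

lemma mass_le_initial:
  assumes "0 \<le> t"
  shows "sqnorm L B (\<lambda>x y. u x y t) \<le> sqnorm L B (\<lambda>x y. u x y 0)"
proof -
  have "weighted_mass 1 0 t \<le> exp (- 0 * t) * weighted_mass 1 0 0"
  proof (rule decay_of_differential_inequality[OF continuous_on_weighted_mass has_real_derivative_weighted_mass _ assms])
    fix s :: real assume "0 < s"
    interpret zk_profile L B "\<lambda>x y. u x y s" "\<lambda>x y. ux x y s" "\<lambda>x y. uxx x y s" "\<lambda>x y. uxxx x y s"
      "\<lambda>x y. uy x y s" "\<lambda>x y. uyy x y s" "\<lambda>x y. uxy x y s" "\<lambda>x y. uxyy x y s"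
      using zk_profile \<open>0 < s\<close> by simp
    show "- integral ({0..L} \<times> {-B..B}) (\<lambda>(x, y). 2 * (1 + 0 * x) * u x y s *
        (ux x y s + (u x y s)\<^sup>2 * ux x y s + uxxx x y s + uxyy x y s)) \<le> - 0 * weighted_mass 1 0 s"
      using energy_identity[of 1 0, unfolded zk_operator_def] outflow_nonneg by simp
  qed
  then show ?thesis
    by (simp add: sqnorm_eq_weighted_mass)
qed

lemma weighted_mass_decay:
  assumes A: "2 * A\<^sup>2 = pi\<^sup>2 * (3 / L\<^sup>2 + 1 / (4 * B\<^sup>2)) - 1"
    and M: "sqnorm L B (\<lambda>x y. u x y 0) < A\<^sup>2 / (2 * pi\<^sup>2 * (1 / L\<^sup>2 + 1 / (4 * B\<^sup>2)))"
    and "0 \<le> t"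
  shows "wnorm L B (\<lambda>x y. u x y t) \<le> exp (- (A\<^sup>2 / (1 + L)) * t) * wnorm L B (\<lambda>x y. u x y 0)"
proof -
  have A': "2 * A\<^sup>2 = 3 * (pi / L)\<^sup>2 + (pi / (2 * B))\<^sup>2 - 1"
    using A by (simp add: power_divide algebra_simps)
  have M': "sqnorm L B (\<lambda>x y. u x y 0) < A\<^sup>2 / (2 * ((pi / L)\<^sup>2 + (pi / (2 * B))\<^sup>2))"
    using M by (simp add: power_divide algebra_simps)
  have "weighted_mass 1 1 t \<le> exp (- (A\<^sup>2 / (1 + L)) * t) * weighted_mass 1 1 0"
  proof (rule decay_of_differential_inequality[OF continuous_on_weighted_mass has_real_derivative_weighted_mass _ \<open>0 \<le> t\<close>])
    fix s :: real assume "0 < s"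
    interpret zk_profile L B "\<lambda>x y. u x y s" "\<lambda>x y. ux x y s" "\<lambda>x y. uxx x y s" "\<lambda>x y. uxxx x y s"
      "\<lambda>x y. uy x y s" "\<lambda>x y. uyy x y s" "\<lambda>x y. uxy x y s" "\<lambda>x y. uxyy x y s"
      using zk_profile \<open>0 < s\<close> by simp
    let ?N = "sqnorm L B (\<lambda>x y. u x y s)"
    have "- integral ({0..L} \<times> {-B..B}) (\<lambda>(x, y). 2 * (1 + 1 * x) * u x y s *
        (ux x y s + (u x y s)\<^sup>2 * ux x y s + uxxx x y s + uxyy x y s))
      = ?N + quartic / 2 - outflow - 3 * sqnorm L B (\<lambda>x y. ux x y s) - sqnorm L B (\<lambda>x y. uy x y s)"
      using energy_identity[of 1 1, unfolded zk_operator_def] by simp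
    also have "\<dots> \<le> - A\<^sup>2 * ?N"
      using L_pos B_pos \<open>0 < s\<close> mass_le_initial[of s] sqnorm_nonneg[OF continuous_on_partials(1)]
      by (intro weighted_energy_rate_le[OF A' M'] wirtinger_x wirtinger_y quartic_le outflow_nonneg) auto
    also have "\<dots> \<le> - (A\<^sup>2 / (1 + L)) * weighted_mass 1 1 s"
    proof -
      have "A\<^sup>2 / (1 + L) * weighted_mass 1 1 s \<le> A\<^sup>2 / (1 + L) * ((1 + L) * ?N)"
        using wnorm_le_sqnorm[OF continuous_on_partials(1)] L_pos
        by (intro mult_left_mono) (auto simp: wnorm_eq_weighted_mass)
      with L_pos show ?thesis
        by simp
    qed
    finally show "- integral ({0..L} \<times> {-B..B}) (\<lambda>(x, y). 2 * (1 + 1 * x) * u x y s *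
        (ux x y s + (u x y s)\<^sup>2 * ux x y s + uxxx x y s + uxyy x y s))
      \<le> - (A\<^sup>2 / (1 + L)) * weighted_mass 1 1 s" .
  qed
  then show ?thesis
    by (simp add: wnorm_eq_weighted_mass)
qed

end

theorem theorem5p1:
  fixes L B A :: real
    and u :: "real \<Rightarrow> real \<Rightarrow> real \<Rightarrow> real"
    and u0 :: "real \<Rightarrow> real \<Rightarrow> real"
  assumes "L > 0" and "B > 0"
    and "2 * A\<^sup>2 = pi\<^sup>2 * (3 / L\<^sup>2 + 1 / (4 * B\<^sup>2)) - 1"
    and "2 * A\<^sup>2 > 0"
    and "sqnorm L B u0 < A\<^sup>2 / (2 * pi\<^sup>2 * (1 / L\<^sup>2 + 1 / (4 * B\<^sup>2)))"
    and "mzk_solution L B u u0"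
  shows "\<forall>t\<ge>0. sqnorm L B (\<lambda>x y. u x y t) \<le> wnorm L B (\<lambda>x y. u x y t) \<and>
                wnorm L B (\<lambda>x y. u x y t) \<le> exp (- (A\<^sup>2 / (1 + L)) * t) * wnorm L B u0"
proof -
  obtain ux uxx uxxx uy uyy uxy uxyy ut where "mzk_flow L B u ux uxx uxxx uy uyy uxy uxyy ut"
    and initial: "\<forall>x y. 0 \<le> x \<and> x \<le> L \<and> -B \<le> y \<and> y \<le> B \<longrightarrow> u x y 0 = u0 x y"
    using mzk_solutionE[OF assms(6,1,2)] .
  then interpret mzk_flow L B u ux uxx uxxx uy uyy uxy uxyy ut
    by simp
  have "sqnorm L B (\<lambda>x y. u x y 0) = sqnorm L B u0" "wnorm L B (\<lambda>x y. u x y 0) = wnorm L B u0"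
    unfolding sqnorm_def wnorm_def using initial by (auto intro!: integral_cong)
  then show ?thesis
    using sqnorm_le_wnorm[OF continuous_on_slice] weighted_mass_decay[OF assms(3)] assms(5) by simp
qed

end
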